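(* Let $\mathcal T\in\Sigma^n$ be a text. Then \[\mathtt{st\text{-}pos}^-\subseteq\Big\{\,j\;:\;\text{either } j=1 \text{ or, for the minimum value } i'<j \text{ such that } \mathcal T[i',j-1] \text{ occurs in } \mathcal T[1,j-2],\ \mathcal T[i',j]\text{ does not occur in }\mathcal T[1,j-1]\Big\}.\]
   Context: A text is a string $\mathcal T\in\Sigma^n$ over an integer alphabet whose last symbol $\mathcal T[n]=\$$ occurs only there and is smallest. For $i\ne j$, $\mathrm{rlce}(i,j)$ is the length of the longest common prefix of $\mathcal T[i,n]$ and $\mathcal T[j,n]$. $\mathrm{LPF}[i]=0$ if $i=1$, else $\mathrm{LPF}[i]=\max_{j<i}\mathrm{rlce}(j,i)$ (the longest previous factor array). $\mathtt{st\text{-}pos}^-$ is the set $\{i+\mathrm{LPF}[i]: i\in[n]\}$ (sorted colexicographically by the prefixes $\mathcal T[1,j]$). *)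

theory Defs
  imports Main "HOL-Library.Sublist"
begin

text \<open>Texts are lists over an integer alphabet, indexed 1-based:
  position i (1 \<le> i \<le> n) of T is T ! (i - 1).  The last symbol occurs
  only at the last position and is the smallest symbol.\<close>

definition is_text :: "int list \<Rightarrow> bool" where
  "is_text T \<longleftrightarrow> T \<noteq> [] \<and> (\<forall>k < length T - 1. last T < T ! k)"

text \<open>Substring T[i,j] (1-based, inclusive); empty if j < i.\<close>
definition substr :: "int list \<Rightarrow> nat \<Rightarrow> nat \<Rightarrow> int list" where
  "substr T i j = drop (i - 1) (take j T)"

definition rlce :: "int list \<Rightarrow> nat \<Rightarrow> nat \<Rightarrow> nat" where
  "rlce T i j = length (longest_common_prefix (drop (i - 1) T) (drop (j - 1) T))"

definition LPF :: "int list \<Rightarrow> nat \<Rightarrow> nat" where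
  "LPF T i = (if i = 1 then 0 else Max {rlce T j i | j. 1 \<le> j \<and> j < i})"

definition st_pos_minus :: "int list \<Rightarrow> nat set" where
  "st_pos_minus T = {i + LPF T i | i. 1 \<le> i \<and> i \<le> length T}"

end

theory Submission
  imports Defs
begin

text \<open>Let \<open>j = i + LPF[i]\<close> with \<open>i \<ge> 2\<close>; the sentinel forces \<open>j \<le> n\<close>.
  Because \<open>T[i, j-1]\<close> occurs before position \<open>i\<close> (or is empty, when \<open>j = i\<close>),
  the least start \<open>i'\<close> of a factor ending at \<open>j-1\<close> that occurs in \<open>T[1, j-2]\<close>
  satisfies \<open>i' \<le> i\<close>.  An occurrence of \<open>T[i', j]\<close> in \<open>T[1, j-1]\<close> would
  then carry along an occurrence of its suffix \<open>T[i, j]\<close> starting before \<open>i\<close>,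
  that is, a previous factor at \<open>i\<close> of length \<open>LPF[i] + 1\<close>.\<close>

lemma sublist_iff_take_drop:
  "sublist xs ys \<longleftrightarrow> (\<exists>k. k + length xs \<le> length ys \<and> xs = take (length xs) (drop k ys))"
proof
  assume "sublist xs ys"
  then obtain ps ss where "ys = ps @ xs @ ss" by (auto simp: sublist_def)
  then show "\<exists>k. k + length xs \<le> length ys \<and> xs = take (length xs) (drop k ys)"
    by (intro exI[of _ "length ps"]) simp
next
  assume "\<exists>k. k + length xs \<le> length ys \<and> xs = take (length xs) (drop k ys)"
  then obtain k where "xs = take (length xs) (drop k ys)" by blast
  then show "sublist xs ys"
    by (metis sublist_take sublist_drop sublist_order.order_trans)
qed

lemma le_length_longest_common_prefix_iff:
  "n \<le> length (longest_common_prefix xs ys) \<longleftrightarrow>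
    n \<le> length xs \<and> n \<le> length ys \<and> take n xs = take n ys"
proof (induction xs ys arbitrary: n rule: longest_common_prefix.induct)
  case (1 x xs y ys)
  then show ?case by (cases n) auto
qed auto

lemma substr_conv_take_drop:
  "1 \<le> i \<Longrightarrow> substr T i j = take (Suc j - i) (drop (i - 1) T)"
  by (simp add: substr_def drop_take)

lemma le_rlce_iff:
  "m \<le> rlce T p i \<longleftrightarrow>
    m \<le> length T - (p - 1) \<and> m \<le> length T - (i - 1) \<and> take m (drop (p - 1) T) = take m (drop (i - 1) T)"
  unfolding rlce_def le_length_longest_common_prefix_iff by auto

lemma length_longest_common_prefix_drop:
  "length (longest_common_prefix xs ys) - d \<le> length (longest_common_prefix (drop d xs) (drop d ys))"
proof (cases "d \<le> length (longest_common_prefix xs ys)")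
  case True
  define n where "n = length (longest_common_prefix xs ys)"
  have "n \<le> length xs" "n \<le> length ys" "take n xs = take n ys"
    using le_length_longest_common_prefix_iff[of n xs ys] by (simp_all add: n_def)
  moreover have "n - d + d = n" using True by (simp add: n_def)
  ultimately show ?thesis
    unfolding n_def[symmetric] le_length_longest_common_prefix_iff
    by (metis diff_le_mono length_drop take_drop)
qed simp

lemma rlce_shift:
  assumes "1 \<le> p" "1 \<le> i"
  shows "rlce T p i - d \<le> rlce T (p + d) (i + d)"
  using length_longest_common_prefix_drop[of "drop (p - 1) T" "drop (i - 1) T" d] assms
  by (simp add: rlce_def add.commute)

lemma sublist_factor_prefix_iff:
  assumes "a - 1 + m \<le> length T"
  shows "sublist (take m (drop (a - 1) T)) (take c T) \<longleftrightarrow>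
    (\<exists>p \<ge> 1. p - 1 + m \<le> c \<and> m \<le> rlce T p a)"
proof (cases "m = 0")
  case False
  have len: "length (take m (drop (a - 1) T)) = m" using assms by simp
  have take_prefix: "take m (drop k (take c T)) = take m (drop k T)" if "k + m \<le> c" for k
    using that by (simp add: take_drop min_def)
  have "sublist (take m (drop (a - 1) T)) (take c T) \<longleftrightarrow>
      (\<exists>k. k + m \<le> c \<and> k + m \<le> length T \<and> take m (drop (a - 1) T) = take m (drop k T))"
    unfolding sublist_iff_take_drop len using take_prefix by auto
  also have "\<dots> \<longleftrightarrow> (\<exists>p \<ge> 1. p - 1 + m \<le> c \<and> m \<le> rlce T p a)"
  proof
    assume "\<exists>k. k + m \<le> c \<and> k + m \<le> length T \<and> take m (drop (a - 1) T) = take m (drop k T)"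
    then obtain k where "k + m \<le> c" "k + m \<le> length T" "take m (drop (a - 1) T) = take m (drop k T)"
      by blast
    then show "\<exists>p \<ge> 1. p - 1 + m \<le> c \<and> m \<le> rlce T p a"
      using assms by (intro exI[of _ "Suc k"]) (auto simp: le_rlce_iff)
  next
    assume "\<exists>p \<ge> 1. p - 1 + m \<le> c \<and> m \<le> rlce T p a"
    then obtain p where "p - 1 + m \<le> c" "m \<le> rlce T p a" by blast
    then show "\<exists>k. k + m \<le> c \<and> k + m \<le> length T \<and> take m (drop (a - 1) T) = take m (drop k T)"
      using False by (intro exI[of _ "p - 1"]) (auto simp: le_rlce_iff)
  qed
  finally show ?thesis .
qed auto

lemma add_rlce_le_length:
  assumes "is_text T" "1 \<le> p" "p < i" "i \<le> length T"
  shows "i + rlce T p i \<le> length T"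
proof (rule ccontr)
  define m where "m = length T - (i - 1)"
  have m: "0 < m" "p - 1 + (m - 1) < length T - 1" "i - 1 + (m - 1) = length T - 1"
    using assms by (simp_all add: m_def)
  assume "\<not> i + rlce T p i \<le> length T"
  then have "m \<le> rlce T p i" using assms by (simp add: m_def)
  then have "take m (drop (p - 1) T) ! (m - 1) = take m (drop (i - 1) T) ! (m - 1)"
    and "m \<le> length T - (p - 1)"
    by (simp_all add: le_rlce_iff)
  then have "T ! (p - 1 + (m - 1)) = T ! (length T - 1)"
    using m assms by (simp add: m_def)
  moreover have "last T < T ! (p - 1 + (m - 1))"
    using assms(1) m(2) by (simp add: is_text_def)
  ultimately show False
    using assms(1) by (simp add: is_text_def last_conv_nth)
qed

lemma rlce_le_LPF:
  assumes "1 \<le> p" "p < i"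
  shows "rlce T p i \<le> LPF T i"
proof -
  have "finite {rlce T j i | j. 1 \<le> j \<and> j < i}" by simp
  then show ?thesis using assms unfolding LPF_def by (auto intro: Max_ge)
qed

lemma LPF_attained:
  assumes "2 \<le> i"
  obtains p where "1 \<le> p" "p < i" "LPF T i = rlce T p i"
proof -
  let ?S = "{rlce T j i | j. 1 \<le> j \<and> j < i}"
  have "Max ?S \<in> ?S" using assms by (intro Max_in) auto
  then show ?thesis using assms that unfolding LPF_def by auto
qed

lemma LPF_factor_sublist_prefix:
  assumes "2 \<le> i"
  shows "sublist (substr T i (i + LPF T i - 1)) (substr T 1 (i + LPF T i - 2))"
proof -
  obtain p where p: "1 \<le> p" "p < i" "LPF T i = rlce T p i"
    using LPF_attained[OF assms] .
  show ?thesis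
  proof (cases "LPF T i = 0")
    case False
    have "rlce T p i \<le> length T - (i - 1)" using le_rlce_iff[of "rlce T p i" T p i] by simp
    then have "i - 1 + LPF T i \<le> length T" using p(3) False by linarith
    moreover have "p - 1 + LPF T i \<le> i + LPF T i - 2" using p(2) assms by linarith
    ultimately have "sublist (take (LPF T i) (drop (i - 1) T)) (take (i + LPF T i - 2) T)"
      using sublist_factor_prefix_iff p by auto
    then show ?thesis using False assms by (simp add: substr_conv_take_drop)
  qed (simp add: substr_def)
qed

lemma LPF_end_factor_not_sublist_prefix:
  assumes "is_text T" "2 \<le> i" "i \<le> length T" "1 \<le> a" "a \<le> i"
  shows "\<not> sublist (substr T a (i + LPF T i)) (substr T 1 (i + LPF T i - 1))"
proof
  define j where "j = i + LPF T i"
  obtain p where "1 \<le> p" "p < i" "LPF T i = rlce T p i"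
    using LPF_attained[OF assms(2)] .
  then have "j \<le> length T" using add_rlce_le_length assms by (simp add: j_def)
  assume "sublist (substr T a (i + LPF T i)) (substr T 1 (i + LPF T i - 1))"
  then have "sublist (take (Suc j - a) (drop (a - 1) T)) (take (j - 1) T)"
    using assms by (simp add: substr_conv_take_drop j_def)
  then obtain q where q: "1 \<le> q" "q - 1 + (Suc j - a) \<le> j - 1" "Suc j - a \<le> rlce T q a"
    using sublist_factor_prefix_iff \<open>j \<le> length T\<close> assms by auto
  have "Suc j - a - (i - a) \<le> rlce T (q + (i - a)) (a + (i - a))"
    using diff_le_mono[OF q(3)] rlce_shift[OF q(1) assms(4)] by (rule le_trans)
  then have "LPF T i < rlce T (q + (i - a)) i"
    using assms by (simp add: j_def)
  moreover have "rlce T (q + (i - a)) i \<le> LPF T i"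
    using q assms by (intro rlce_le_LPF) (auto simp: j_def)
  ultimately show False by simp
qed

theorem corollary47:
  assumes "is_text T"
  shows "st_pos_minus T \<subseteq>
    {j. j = 1 \<or>
        ((\<exists>i'. 1 \<le> i' \<and> i' < j \<and> sublist (substr T i' (j - 1)) (substr T 1 (j - 2))) \<longrightarrow>
         \<not> sublist (substr T (LEAST i'. 1 \<le> i' \<and> i' < j \<and> sublist (substr T i' (j - 1)) (substr T 1 (j - 2))) j)
                   (substr T 1 (j - 1)))}"
proof -
  define P where "P j i' \<longleftrightarrow> 1 \<le> i' \<and> i' < j \<and> sublist (substr T i' (j - 1)) (substr T 1 (j - 2))"
    for j i' :: nat
  have "\<not> sublist (substr T (LEAST i'. P j i') j) (substr T 1 (j - 1))"
    if st_pos: "j \<in> st_pos_minus T" and "j \<noteq> 1" and ex: "\<exists>i'. P j i'" for j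
  proof -
    obtain i where i: "1 \<le> i" "i \<le> length T" and j: "j = i + LPF T i"
      using st_pos by (auto simp: st_pos_minus_def)
    have "i \<noteq> 1" using \<open>j \<noteq> 1\<close> j by (auto simp: LPF_def)
    have least: "P j (LEAST i'. P j i')" using ex by (rule LeastI_ex)
    have "(LEAST i'. P j i') \<le> i"
    proof (cases "LPF T i = 0")
      case True
      then show ?thesis using least j by (simp add: P_def)
    next
      case False
      then have "P j i"
        using LPF_factor_sublist_prefix[of i T] i \<open>i \<noteq> 1\<close> j by (simp add: P_def)
      then show ?thesis by (rule Least_le)
    qed
    then show ?thesis
      using LPF_end_factor_not_sublist_prefix[OF assms] least i \<open>i \<noteq> 1\<close> j by (simp add: P_def)
  qed
  then show ?thesis by (auto simp: P_def)
qed

end
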